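(* Let $v \ge 360$ be an integer. Then \[ \beta(5,v,4) \le \left\lfloor \frac{5v-15}{3} \right\rfloor, \] and \[ \beta(5,v,4) \ge \begin{cases} \frac{5v-27}{3} & \text{if } v \equiv 0 \pmod 3,\\ \frac{5v-32}{3} & \text{if } v \equiv 1 \pmod 3,\\ \frac{5v-22}{3} & \text{if } v \equiv 2 \pmod 3. \end{cases} \]
   Context: For integers $v \ge k \ge 2$, a $(v,k)$-packing is a pair $(X,\mathcal{B})$ where $X$ is a set of $v$ points and $\mathcal{B}$ is a set of $k$-subsets of $X$ (blocks) such that every pair of distinct points lies in at most one block. A partial parallel class (PPC) is a set of pairwise disjoint blocks; its size is the number of blocks. A PPC of size $\rho$ is maximum if the packing has no PPC of size $\rho+1$. $\beta(\rho,v,k)$ denotes the maximum number of blocks in a $(v,k)$-packing in which the maximum PPC has size $\rho$. *)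

theory Defs
  imports Main
begin

definition packing :: "nat \<Rightarrow> nat \<Rightarrow> 'a set \<Rightarrow> 'a set set \<Rightarrow> bool" where
  "packing v k X B \<longleftrightarrow> finite X \<and> card X = v \<and>
     (\<forall>b\<in>B. b \<subseteq> X \<and> card b = k) \<and>
     (\<forall>x\<in>X. \<forall>y\<in>X. x \<noteq> y \<longrightarrow> card {b\<in>B. x \<in> b \<and> y \<in> b} \<le> 1)"

definition is_ppc :: "'a set set \<Rightarrow> 'a set set \<Rightarrow> bool" where
  "is_ppc B P \<longleftrightarrow> P \<subseteq> B \<and> (\<forall>b\<in>P. \<forall>c\<in>P. b \<noteq> c \<longrightarrow> b \<inter> c = {})"

definition max_ppc_size :: "'a set set \<Rightarrow> nat \<Rightarrow> bool" where
  "max_ppc_size B \<rho> \<longleftrightarrow> (\<exists>P. is_ppc B P \<and> card P = \<rho>) \<and>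
     \<not> (\<exists>P. is_ppc B P \<and> card P = \<rho> + 1)"

text \<open>beta(rho,v,k); points taken WLOG to be {0..<v}.\<close>
definition beta :: "nat \<Rightarrow> nat \<Rightarrow> nat \<Rightarrow> nat" where
  "beta \<rho> v k = Max {card B | B. packing v k {..<v} B \<and> max_ppc_size B \<rho>}"

end

theory Submission
  imports Defs
begin

(*
  Fix a maximum PPC P of the packing B; its five blocks cover a set S of 20
  points, and T is the set of the remaining v - 20 points. A pendant of x in S is a block
  meeting S in x alone, and x is a centre if it has at least 13 pendants. Pendants at
  distinct centres can be chosen disjoint and away from a few prescribed points, so
  exchanging blocks of P for pendants would enlarge P unless (a) distinct centres lie in
  distinct blocks of P, and (b) every block without a centre meets a block of P without a
  centre. Now charge 3 to every block outside P. A block through a centre covers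
  |b \<inter> centres| * |b \<inter> T| pairs (centre, point of T), and the rest of its charge is
  paid by the pairs (centre, non-centre of S) it covers, except for at most one block
  consisting of centres. By (b) a block without a centre is a pendant at a non-centre of a
  centre-free block p of P or covers a pair of p \<times> (S - p - centres). As every pair lies
  in at most one block, c centres give
    3 |B - P| \<le> c (v - 20) + c (17 - c) + 3 + 3 (5 - c) (112 - 4 c),
  which is at most 5 v - 30 when v \<ge> 360.

  On the points 0, ..., 4 and a grid Z_m \<times> {0, 1, 2}, the blocks
  {i, (a, 0), (a + i, 1), (a + 2 i, 2)} for i < 5 and a in Z_m, together with {0, 1, 2, 3},
  form a packing with 5 m + 1 blocks, because two grid points in different columns
  determine i and a once m \<ge> 10. Every block meets {0, ..., 4}, so no PPC has more than
  five blocks, and the blocks with a = i form one with five. Take m = (v - 5) div 3.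
*)

section \<open>Packings and partial parallel classes\<close>

lemma is_ppc_subset: "is_ppc B P \<Longrightarrow> Q \<subseteq> P \<Longrightarrow> is_ppc B Q"
  unfolding is_ppc_def by blast

lemma is_ppc_Un:
  assumes "is_ppc B D" "is_ppc B E" "\<And>d e. d \<in> D \<Longrightarrow> e \<in> E \<Longrightarrow> d \<inter> e = {}"
  shows "is_ppc B (D \<union> E)"
  unfolding is_ppc_def
proof (intro conjI ballI impI)
  show "D \<union> E \<subseteq> B"
    using assms(1,2) unfolding is_ppc_def by auto
next
  fix b c assume "b \<in> D \<union> E" "c \<in> D \<union> E" "b \<noteq> c"
  then show "b \<inter> c = {}"
    using assms unfolding is_ppc_def by (elim UnE) (auto simp: inf_commute)
qed

lemma is_ppc_card_le_max_ppc_size: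
  assumes "max_ppc_size B \<rho>" "is_ppc B Q"
  shows "card Q \<le> \<rho>"
proof (rule ccontr)
  assume "\<not> card Q \<le> \<rho>"
  then obtain Q' where "Q' \<subseteq> Q" "card Q' = \<rho> + 1"
    using obtain_subset_with_card_n[of "\<rho> + 1" Q] by auto
  moreover have "\<not> (\<exists>Q'. is_ppc B Q' \<and> card Q' = \<rho> + 1)"
    using assms(1) unfolding max_ppc_size_def by simp
  ultimately show False
    using is_ppc_subset[OF assms(2)] by blast
qed

lemma max_ppc_sizeI:
  assumes "is_ppc B P" "card P = \<rho>" "\<And>Q. is_ppc B Q \<Longrightarrow> card Q \<le> \<rho>"
  shows "max_ppc_size B \<rho>"
  using assms unfolding max_ppc_size_def by fastforce

lemma card_ppc_le_transversal:
  assumes "is_ppc B Q" "finite Y" "\<And>b. b \<in> B \<Longrightarrow> b \<inter> Y \<noteq> {}"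
  shows "card Q \<le> card Y"
proof -
  define f where "f b = (SOME y. y \<in> b \<inter> Y)" for b
  have f: "f b \<in> b \<inter> Y" if "b \<in> Q" for b
  proof -
    have "b \<in> B" using assms(1) that unfolding is_ppc_def by auto
    then have "\<exists>y. y \<in> b \<inter> Y" using assms(3) by auto
    then show ?thesis
      unfolding f_def by (rule someI_ex)
  qed
  have "inj_on f Q"
  proof (rule inj_onI)
    fix b b' assume b: "b \<in> Q" "b' \<in> Q" "f b = f b'"
    have "f b \<in> b \<inter> b'" using f[OF b(1)] f[OF b(2)] b(3) by simp
    then show "b = b'"
      using b assms(1) unfolding is_ppc_def by auto
  qed
  moreover have "f ` Q \<subseteq> Y" using f by auto
  ultimately show ?thesis
    by (rule card_inj_on_le[OF _ _ assms(2)])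
qed

lemma packingI:
  assumes "finite X" "\<And>b. b \<in> B \<Longrightarrow> b \<subseteq> X \<and> card b = k"
    and "\<And>b b' x y. b \<in> B \<Longrightarrow> b' \<in> B \<Longrightarrow> x \<noteq> y \<Longrightarrow> {x, y} \<subseteq> b \<Longrightarrow> {x, y} \<subseteq> b' \<Longrightarrow> b = b'"
  shows "packing (card X) k X B"
proof -
  have "card {b\<in>B. x \<in> b \<and> y \<in> b} \<le> 1" if "x \<noteq> y" for x y
  proof -
    have "{b\<in>B. x \<in> b \<and> y \<in> b} \<subseteq> Pow X"
      using assms(2) by auto
    then have fin: "finite {b\<in>B. x \<in> b \<and> y \<in> b}"
      by (rule finite_subset) (simp add: assms(1))
    have "card {b\<in>B. x \<in> b \<and> y \<in> b} \<le> Suc 0"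
      unfolding card_le_Suc0_iff_eq[OF fin] using assms(3)[OF _ _ that] by auto
    then show ?thesis by simp
  qed
  then show ?thesis
    using assms(1,2) unfolding packing_def by auto
qed

locale packing_design =
  fixes v k :: nat and X :: "'a set" and B :: "'a set set"
  assumes packing: "packing v k X B"
begin

lemma finite_X: "finite X" and card_X: "card X = v"
  using packing unfolding packing_def by auto

lemma block_subset: "b \<in> B \<Longrightarrow> b \<subseteq> X"
  and card_block: "b \<in> B \<Longrightarrow> card b = k"
  using packing unfolding packing_def by auto

lemma finite_block: "b \<in> B \<Longrightarrow> finite b"
  by (rule finite_subset[OF block_subset finite_X])

lemma finite_blocks: "finite B"
  using block_subset finite_X by (intro finite_subset[of B "Pow X"]) auto

lemma block_unique:
  assumes "b \<in> B" "b' \<in> B" "x \<noteq> y" "{x, y} \<subseteq> b" "{x, y} \<subseteq> b'"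
  shows "b = b'"
proof -
  have "x \<in> X" "y \<in> X"
    using assms(1,4) block_subset by auto
  moreover have "\<forall>x\<in>X. \<forall>y\<in>X. x \<noteq> y \<longrightarrow> card {c\<in>B. x \<in> c \<and> y \<in> c} \<le> 1"
    using packing unfolding packing_def by simp
  ultimately have "card {c\<in>B. x \<in> c \<and> y \<in> c} \<le> 1"
    using assms(3) by simp
  then have "\<forall>c\<in>{c\<in>B. x \<in> c \<and> y \<in> c}. \<forall>c'\<in>{c\<in>B. x \<in> c \<and> y \<in> c}. c = c'"
    using card_le_Suc0_iff_eq[of "{c\<in>B. x \<in> c \<and> y \<in> c}"] finite_blocks by simp
  then show ?thesis
    using assms by auto
qed

lemma card_Int_blocks_le_1:
  assumes "b \<in> B" "b' \<in> B" "b \<noteq> b'"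
  shows "card (b \<inter> b') \<le> 1"
proof -
  have "card (b \<inter> b') \<le> Suc 0"
    unfolding card_le_Suc0_iff_eq[OF finite_Int[OF disjI1[OF finite_block[OF assms(1)]]]]
    using assms block_unique by auto
  then show ?thesis by simp
qed

lemma sum_card_pairs_in_blocks_le:
  assumes "B' \<subseteq> B" "finite R" "\<And>x y. (x, y) \<in> R \<Longrightarrow> x \<noteq> y"
  shows "(\<Sum>b\<in>B'. card (R \<inter> b \<times> b)) \<le> card R"
proof -
  have "(\<Sum>b\<in>B'. card (R \<inter> b \<times> b)) = card (\<Union>b\<in>B'. R \<inter> b \<times> b)"
  proof (rule card_UN_disjoint[symmetric])
    show "finite B'" using assms(1) finite_blocks finite_subset by auto
    show "\<forall>b\<in>B'. finite (R \<inter> b \<times> b)" using assms(2) by auto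
    show "\<forall>b\<in>B'. \<forall>b'\<in>B'. b \<noteq> b' \<longrightarrow> R \<inter> b \<times> b \<inter> (R \<inter> b' \<times> b') = {}"
    proof (intro ballI impI)
      fix b b' assume "b \<in> B'" "b' \<in> B'" "b \<noteq> b'"
      then have "(x, y) \<notin> R \<inter> b \<times> b \<inter> (R \<inter> b' \<times> b')" for x y
        using assms block_unique[of b b' x y] by auto
      then show "R \<inter> b \<times> b \<inter> (R \<inter> b' \<times> b') = {}"
        by auto
    qed
  qed
  also have "\<dots> \<le> card R"
    using assms(2) by (intro card_mono) auto
  finally show ?thesis .
qed

lemma card_blocks_covering_pairs_le:
  assumes "finite R" "\<And>x y. (x, y) \<in> R \<Longrightarrow> x \<noteq> y"
  shows "card {b\<in>B. R \<inter> b \<times> b \<noteq> {}} \<le> card R"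
proof -
  have "card {b\<in>B. R \<inter> b \<times> b \<noteq> {}} = (\<Sum>b\<in>{b\<in>B. R \<inter> b \<times> b \<noteq> {}}. 1)"
    by simp
  also have "\<dots> \<le> (\<Sum>b\<in>{b\<in>B. R \<inter> b \<times> b \<noteq> {}}. card (R \<inter> b \<times> b))"
    using assms(1) by (intro sum_mono) (auto simp: Suc_le_eq card_gt_0_iff)
  also have "\<dots> \<le> card R"
    using assms by (intro sum_card_pairs_in_blocks_le) auto
  finally show ?thesis .
qed

lemma card_block_Int_eq_iff: "b \<in> B \<Longrightarrow> card (b \<inter> A) = k \<longleftrightarrow> b \<subseteq> A"
  using card_subset_eq[of b "b \<inter> A"] finite_block[of b] card_block[of b] Int_absorb2[of b A]
  by (metis inf.cobounded1 inf.orderI)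

end

section \<open>Exchanges against a maximum partial parallel class\<close>

locale max_ppc_packing = packing_design +
  fixes P :: "'a set set"
  assumes ppc: "is_ppc B P"
    and card_ppc_le: "is_ppc B Q \<Longrightarrow> card Q \<le> card P"
    and k_pos: "0 < k"
begin

lemma P_subset: "P \<subseteq> B"
  and P_disjoint: "p \<in> P \<Longrightarrow> q \<in> P \<Longrightarrow> p \<noteq> q \<Longrightarrow> p \<inter> q = {}"
  using ppc unfolding is_ppc_def by auto

lemma finite_P: "finite P"
  using P_subset finite_blocks finite_subset by auto

lemma block_nonempty: "b \<in> B \<Longrightarrow> b \<noteq> {}"
  using card_block[of b] k_pos by auto

lemma card_exchange_le:
  assumes "is_ppc B D" "Q \<subseteq> P" "\<And>d p. d \<in> D \<Longrightarrow> p \<in> P - Q \<Longrightarrow> d \<inter> p = {}"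
  shows "card D \<le> card Q"
proof -
  have "is_ppc B (D \<union> (P - Q))"
    using assms(3) by (intro is_ppc_Un[OF assms(1) is_ppc_subset[OF ppc]]) auto
  then have "card (D \<union> (P - Q)) \<le> card P"
    by (rule card_ppc_le)
  moreover have "D \<inter> (P - Q) = {}"
  proof (rule ccontr)
    assume "D \<inter> (P - Q) \<noteq> {}"
    then obtain d where "d \<in> D" "d \<in> P - Q" by auto
    then have "d = {}" using assms(3)[of d d] by simp
    then show False
      using \<open>d \<in> P - Q\<close> P_subset block_nonempty by auto
  qed
  moreover have "finite D"
    using assms(1) finite_blocks finite_subset unfolding is_ppc_def by auto
  moreover have "card (P - Q) = card P - card Q" "card Q \<le> card P"
    using assms(2) finite_P by (auto simp: card_Diff_subset finite_subset card_mono)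
  ultimately show ?thesis
    using finite_P by (simp add: card_Un_disjoint)
qed

definition S :: "'a set" where "S = \<Union>P"
definition T :: "'a set" where "T = X - S"

lemma P_block_subset_S: "p \<in> P \<Longrightarrow> p \<subseteq> S"
  unfolding S_def by auto

lemma S_subset: "S \<subseteq> X"
  unfolding S_def using P_subset block_subset by auto

lemma finite_S: "finite S" and finite_T: "finite T"
  unfolding T_def using finite_subset[OF S_subset finite_X] finite_X by auto

lemma card_S: "card S = k * card P"
proof -
  have "card S = sum card P"
    unfolding S_def using P_disjoint P_subset finite_block
    by (intro card_Union_disjoint) (auto simp: pairwise_def disjnt_def)
  also have "\<dots> = (\<Sum>p\<in>P. k)"
    using P_subset card_block by (intro sum.cong) auto
  also have "\<dots> = k * card P"
    by simp
  finally show ?thesis .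
qed

lemma card_T: "card T = v - k * card P"
  unfolding T_def using card_Diff_subset[OF finite_S S_subset] card_S card_X by simp

lemma card_block_S_T:
  assumes "b \<in> B"
  shows "card (b \<inter> S) + card (b \<inter> T) = k"
proof -
  have "b = (b \<inter> S) \<union> (b \<inter> T)"
    using block_subset[OF assms] unfolding T_def by auto
  moreover have "(b \<inter> S) \<inter> (b \<inter> T) = {}"
    unfolding T_def by auto
  ultimately have "card b = card (b \<inter> S) + card (b \<inter> T)"
    using finite_block[OF assms] card_Un_disjoint[of "b \<inter> S" "b \<inter> T"] by simp
  then show ?thesis
    using card_block[OF assms] by simp
qed

definition pblock :: "'a \<Rightarrow> 'a set" where
  "pblock x = (THE p. p \<in> P \<and> x \<in> p)"

lemma pblock_eq: "p \<in> P \<Longrightarrow> x \<in> p \<Longrightarrow> pblock x = p"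
  unfolding pblock_def using P_disjoint by (intro the_equality) auto

lemma pblock_in_P: "x \<in> S \<Longrightarrow> pblock x \<in> P"
  and mem_pblock: "x \<in> S \<Longrightarrow> x \<in> pblock x"
  unfolding S_def using pblock_eq by auto

lemma card_P_blocks_meeting_le: "finite b \<Longrightarrow> card {p\<in>P. p \<inter> b \<noteq> {}} \<le> card (b \<inter> S)"
proof -
  assume "finite b"
  have "{p\<in>P. p \<inter> b \<noteq> {}} \<subseteq> pblock ` (b \<inter> S)"
  proof
    fix p assume "p \<in> {p\<in>P. p \<inter> b \<noteq> {}}"
    then obtain x where "p \<in> P" "x \<in> p" "x \<in> b" by auto
    then show "p \<in> pblock ` (b \<inter> S)"
      using pblock_eq P_block_subset_S by (intro image_eqI[of _ _ x]) auto
  qed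
  then have "card {p\<in>P. p \<inter> b \<noteq> {}} \<le> card (pblock ` (b \<inter> S))"
    using \<open>finite b\<close> by (intro card_mono) auto
  also have "\<dots> \<le> card (b \<inter> S)"
    using \<open>finite b\<close> by (intro card_image_le) auto
  finally show ?thesis .
qed

definition pendants :: "'a \<Rightarrow> 'a set set" where
  "pendants x = {b\<in>B. b \<inter> S = {x}}"

lemma pendant_in_B: "l \<in> pendants x \<Longrightarrow> l \<in> B"
  and mem_pendant: "l \<in> pendants x \<Longrightarrow> x \<in> l"
  and pendant_Int_S: "l \<in> pendants x \<Longrightarrow> y \<in> S \<Longrightarrow> y \<in> l \<Longrightarrow> y = x"
  unfolding pendants_def by auto

lemma finite_pendants: "finite (pendants x)"
  unfolding pendants_def using finite_blocks by simp

lemma pendant_disjoint_P_block: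
  assumes "l \<in> pendants x" "p \<in> P" "x \<notin> p"
  shows "l \<inter> p = {}"
  using assms pendant_Int_S P_block_subset_S by blast

lemma pendant_disjoint_block:
  assumes "l \<in> pendants c" "c \<notin> b" "l \<inter> (b \<inter> T) = {}"
  shows "l \<inter> b = {}"
proof -
  have "l \<subseteq> S \<union> T"
    using block_subset[OF pendant_in_B[OF assms(1)]] unfolding T_def by auto
  then show ?thesis
    using assms pendant_Int_S by blast
qed

lemma pendant_avoiding:
  assumes "finite W" "x \<notin> W" "card W < card (pendants x)"
  obtains l where "l \<in> pendants x" "l \<inter> W = {}"
proof -
  let ?H = "{l\<in>pendants x. l \<inter> W \<noteq> {}}"
  have "?H \<subseteq> {b\<in>B. ({x} \<times> W) \<inter> b \<times> b \<noteq> {}}"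
    using pendant_in_B mem_pendant by auto
  moreover have "card {b\<in>B. ({x} \<times> W) \<inter> b \<times> b \<noteq> {}} \<le> card ({x} \<times> W)"
    using assms(1,2) by (intro card_blocks_covering_pairs_le) auto
  ultimately have H: "card ?H \<le> card W"
    using finite_blocks card_mono[of "{b\<in>B. ({x} \<times> W) \<inter> b \<times> b \<noteq> {}}" ?H]
    by (simp add: card_cartesian_product_singleton)
  have "\<not> pendants x \<subseteq> ?H"
  proof
    assume "pendants x \<subseteq> ?H"
    then have "card (pendants x) \<le> card ?H"
      using finite_pendants by (intro card_mono) auto
    then show False
      using H assms(3) by linarith
  qed
  then show ?thesis
    using that by auto
qed

lemma disjoint_pendants_avoiding:
  assumes "finite I" "I \<subseteq> S" "finite Z" "Z \<inter> I = {}"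
    and "card Z + k * card I \<le> n + k" "\<And>c. c \<in> I \<Longrightarrow> n < card (pendants c)"
  shows "\<exists>l. (\<forall>c\<in>I. l c \<in> pendants c \<and> l c \<inter> Z = {}) \<and> pairwise (\<lambda>c c'. l c \<inter> l c' = {}) I"
  using assms
proof (induction I rule: finite_induct)
  case empty
  then show ?case by simp
next
  case (insert i I)
  then obtain l where l: "\<forall>c\<in>I. l c \<in> pendants c \<and> l c \<inter> Z = {}"
    and l_disj: "pairwise (\<lambda>c c'. l c \<inter> l c' = {}) I"
    by auto
  define W where "W = Z \<union> (\<Union>c\<in>I. l c)"
  have "card (\<Union>c\<in>I. l c) \<le> (\<Sum>c\<in>I. card (l c))"
    using insert.hyps(1) by (rule card_UN_le)
  also have "\<dots> = (\<Sum>c\<in>I. k)"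
    using l pendant_in_B card_block by (intro sum.cong) auto
  also have "\<dots> = k * card I"
    by simp
  finally have "card W \<le> card Z + k * card I"
    unfolding W_def using card_Un_le[of Z "\<Union>c\<in>I. l c"] by linarith
  moreover have "card Z + k * card I \<le> n"
    using insert.prems(4) insert.hyps by simp
  ultimately have card_W: "card W < card (pendants i)"
    using insert.prems(5)[of i] by simp
  have "finite W"
    unfolding W_def using insert.hyps(1) insert.prems(2) l pendant_in_B finite_block by auto
  moreover have "i \<notin> W"
    unfolding W_def using insert.hyps(2) insert.prems(1,3) l pendant_Int_S by fastforce
  ultimately obtain li where li: "li \<in> pendants i" "li \<inter> W = {}"
    using card_W by (rule pendant_avoiding)
  have "\<forall>c\<in>insert i I. (l(i := li)) c \<in> pendants c \<and> (l(i := li)) c \<inter> Z = {}"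
    using l li unfolding W_def by auto
  moreover have "pairwise (\<lambda>c c'. (l(i := li)) c \<inter> (l(i := li)) c' = {}) (insert i I)"
    using l_disj li insert.hyps(2) unfolding W_def pairwise_insert
    by (auto simp: pairwise_def)
  ultimately show ?case by blast
qed

lemma is_ppc_pendants:
  assumes "\<And>c. c \<in> I \<Longrightarrow> l c \<in> pendants c" "pairwise (\<lambda>c c'. l c \<inter> l c' = {}) I"
  shows "is_ppc B (l ` I)" and "inj_on l I"
proof -
  show "is_ppc B (l ` I)"
    unfolding is_ppc_def
  proof (intro conjI ballI impI)
    show "l ` I \<subseteq> B"
      using assms(1) pendant_in_B by auto
    fix d e assume "d \<in> l ` I" "e \<in> l ` I" "d \<noteq> e"
    then obtain c c' where "c \<in> I" "c' \<in> I" "c \<noteq> c'" "d = l c" "e = l c'"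
      by auto
    then show "d \<inter> e = {}"
      using assms(2) unfolding pairwise_def by simp
  qed
  show "inj_on l I"
  proof (rule inj_onI)
    fix c c' assume "c \<in> I" "c' \<in> I" "l c = l c'"
    then show "c = c'"
      using assms mem_pendant unfolding pairwise_def by blast
  qed
qed

lemma card_pendant_exchange:
  assumes "Q \<subseteq> P" "I \<subseteq> S" "\<And>c. c \<in> I \<Longrightarrow> pblock c \<in> Q"
    and "\<And>c. c \<in> I \<Longrightarrow> l c \<in> pendants c" "pairwise (\<lambda>c c'. l c \<inter> l c' = {}) I"
    and "is_ppc B E" "\<And>e p. e \<in> E \<Longrightarrow> p \<in> P - Q \<Longrightarrow> e \<inter> p = {}"
    and "\<And>e c. e \<in> E \<Longrightarrow> c \<in> I \<Longrightarrow> e \<inter> l c = {}"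
  shows "card E + card I \<le> card Q"
proof -
  have "E \<inter> l ` I = {}"
    using assms(4,8) mem_pendant by fastforce
  moreover have "finite E" "finite I"
    using assms(2,6) finite_blocks finite_S finite_subset unfolding is_ppc_def by auto
  ultimately have "card (E \<union> l ` I) = card E + card I"
    using is_ppc_pendants(2)[OF assms(4,5)] by (simp add: card_Un_disjoint card_image)
  moreover have "is_ppc B (E \<union> l ` I)"
    using assms(8) by (intro is_ppc_Un[OF assms(6) is_ppc_pendants(1)[OF assms(4,5)]]) auto
  moreover have "l c \<inter> p = {}" if "c \<in> I" "p \<in> P - Q" for c p
    using that assms(3,4) pblock_eq by (intro pendant_disjoint_P_block) auto
  then have "d \<inter> p = {}" if "d \<in> E \<union> l ` I" "p \<in> P - Q" for d p
    using that by (elim UnE imageE) (simp_all add: assms(7))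
  ultimately show ?thesis
    using card_exchange_le[of "E \<union> l ` I" Q] assms(1) by simp
qed

end

section \<open>Packings of 4-sets whose maximum partial parallel class has five blocks\<close>

locale packing4_max_ppc5 = max_ppc_packing v 4 X B P for v X B P +
  assumes card_P: "card P = 5"
begin

(* The threshold 13 leaves a pendant that avoids any 12 given points; 12 is what the greedy
   choice in centreless_block_meets_plain_block has to avoid. *)
definition centres :: "'a set" where
  "centres = {x\<in>S. 13 \<le> card (pendants x)}"

lemma centres_subset_S: "centres \<subseteq> S"
  unfolding centres_def by auto

lemma finite_centres: "finite centres"
  using finite_subset[OF centres_subset_S finite_S] .

lemma inj_on_pblock_centres: "inj_on pblock centres"
proof (rule inj_onI)
  fix c c' assume c: "c \<in> centres" "c' \<in> centres" "pblock c = pblock c'"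
  show "c = c'"
  proof (rule ccontr)
    assume "c \<noteq> c'"
    have "\<exists>l. (\<forall>x\<in>{c, c'}. l x \<in> pendants x \<and> l x \<inter> {} = {}) \<and> pairwise (\<lambda>x y. l x \<inter> l y = {}) {c, c'}"
      using c(1,2) centres_subset_S \<open>c \<noteq> c'\<close>
      by (intro disjoint_pendants_avoiding[where n = 12]) (auto simp: centres_def)
    then obtain l where "\<And>x. x \<in> {c, c'} \<Longrightarrow> l x \<in> pendants x" "pairwise (\<lambda>x y. l x \<inter> l y = {}) {c, c'}"
      by auto
    then have "card ({} :: 'a set set) + card {c, c'} \<le> card {pblock c}"
      using c centres_subset_S pblock_in_P
      by (intro card_pendant_exchange) (auto simp: is_ppc_def)
    then show False
      using \<open>c \<noteq> c'\<close> by simp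
  qed
qed

lemma card_centres_le: "card centres \<le> 5"
  using card_inj_on_le[OF inj_on_pblock_centres _ finite_P] pblock_in_P centres_subset_S card_P
  by auto

definition plain_blocks :: "'a set set" where
  "plain_blocks = {p\<in>P. p \<inter> centres = {}}"

lemma pblock_image_centres: "pblock ` centres = P - plain_blocks"
proof
  show "pblock ` centres \<subseteq> P - plain_blocks"
    using pblock_in_P mem_pblock centres_subset_S unfolding plain_blocks_def by blast
  show "P - plain_blocks \<subseteq> pblock ` centres"
  proof
    fix p assume "p \<in> P - plain_blocks"
    then obtain c where "p \<in> P" "c \<in> p" "c \<in> centres"
      unfolding plain_blocks_def by auto
    then show "p \<in> pblock ` centres"
      using pblock_eq by (intro image_eqI[of _ _ c]) auto
  qed
qed

lemma card_plain_blocks: "card plain_blocks + card centres = 5"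
proof -
  have "card centres = card (P - plain_blocks)"
    using card_image[OF inj_on_pblock_centres] pblock_image_centres by simp
  also have "\<dots> = card P - card plain_blocks"
    using finite_P by (intro card_Diff_subset) (auto simp: plain_blocks_def)
  finally show ?thesis
    using card_P card_mono[OF finite_P, of plain_blocks] by (auto simp: plain_blocks_def)
qed

lemma card_centres_in_blocks:
  assumes "Q \<subseteq> P - plain_blocks"
  shows "card {c\<in>centres. pblock c \<in> Q} = card Q"
proof -
  have "pblock ` {c\<in>centres. pblock c \<in> Q} = Q"
  proof
    show "Q \<subseteq> pblock ` {c\<in>centres. pblock c \<in> Q}"
    proof
      fix p assume "p \<in> Q"
      then have "p \<in> pblock ` centres"
        using assms pblock_image_centres by auto
      then obtain c where "c \<in> centres" "p = pblock c"
        by auto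
      then show "p \<in> pblock ` {c\<in>centres. pblock c \<in> Q}"
        using \<open>p \<in> Q\<close> by auto
    qed
  qed auto
  moreover have "inj_on pblock {c\<in>centres. pblock c \<in> Q}"
    using inj_on_pblock_centres by (rule inj_on_subset) auto
  ultimately show ?thesis
    using card_image by fastforce
qed

(* Otherwise every block of P met by b holds a centre, and b together with disjoint pendants
   at these centres would replace them in P. *)
lemma centreless_block_meets_plain_block:
  assumes b: "b \<in> B" "b \<notin> P" "b \<inter> centres = {}"
  shows "\<exists>p\<in>plain_blocks. p \<inter> b \<noteq> {}"
proof (rule ccontr)
  assume no_plain: "\<not> ?thesis"
  define Q where "Q = {p\<in>P. p \<inter> b \<noteq> {}}"
  define I where "I = {c\<in>centres. pblock c \<in> Q}"
  have I_subset: "I \<subseteq> S"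
    unfolding I_def using centres_subset_S by auto
  have card_I: "card I = card Q"
    unfolding I_def using no_plain by (intro card_centres_in_blocks) (auto simp: Q_def)
  have "card Q \<le> card (b \<inter> S)"
    unfolding Q_def using finite_block[OF b(1)] by (rule card_P_blocks_meeting_le)
  then have bound: "card (b \<inter> T) + 4 * card I \<le> 12 + 4"
    using card_block_S_T[OF b(1)] card_I by linarith
  have disj: "(b \<inter> T) \<inter> I = {}"
    using I_subset unfolding T_def by auto
  have pend: "12 < card (pendants c)" if "c \<in> I" for c
    using that unfolding I_def centres_def by auto
  have "\<exists>l. (\<forall>c\<in>I. l c \<in> pendants c \<and> l c \<inter> (b \<inter> T) = {})
      \<and> pairwise (\<lambda>c c'. l c \<inter> l c' = {}) I"
    using finite_subset[OF I_subset finite_S] I_subset finite_Int[OF disjI2[OF finite_T]] disj bound pend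
    by (rule disjoint_pendants_avoiding)
  then obtain l where l: "\<forall>c\<in>I. l c \<in> pendants c \<and> l c \<inter> (b \<inter> T) = {}"
    and l_disj: "pairwise (\<lambda>c c'. l c \<inter> l c' = {}) I"
    by auto
  have "b \<inter> l c = {}" if "c \<in> I" for c
    using pendant_disjoint_block[of "l c" c b] l that b(3) unfolding I_def by auto
  moreover have "pblock c \<in> Q" if "c \<in> I" for c
    using that unfolding I_def by simp
  ultimately have "card {b} + card I \<le> card Q"
    using l l_disj b(1) I_subset
    by (intro card_pendant_exchange) (auto simp: is_ppc_def Q_def)
  then show False
    using card_I by simp
qed

lemma sum_centre_T_pairs_le:
  "(\<Sum>b\<in>B - P. card (b \<inter> centres) * card (b \<inter> T)) \<le> card centres * card T"
proof -
  have "(centres \<times> T) \<inter> b \<times> b = (b \<inter> centres) \<times> (b \<inter> T)" for b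
    by auto
  then have "(\<Sum>b\<in>B - P. card (b \<inter> centres) * card (b \<inter> T))
      = (\<Sum>b\<in>B - P. card ((centres \<times> T) \<inter> b \<times> b))"
    by (simp add: card_cartesian_product)
  also have "\<dots> \<le> card (centres \<times> T)"
    using finite_centres finite_T centres_subset_S
    by (intro sum_card_pairs_in_blocks_le) (auto simp: T_def)
  finally show ?thesis
    by (simp add: card_cartesian_product)
qed

lemma card_blocks_within_centres_le_1: "card {b\<in>B. b \<subseteq> centres} \<le> 1"
proof -
  have "b = b'" if "b \<in> B" "b' \<in> B" "b \<subseteq> centres" "b' \<subseteq> centres" for b b'
  proof (rule ccontr)
    assume "b \<noteq> b'"
    then have "card (b \<inter> b') \<le> 1"
      using card_Int_blocks_le_1 that(1,2) by simp
    moreover have "card (b \<union> b') \<le> card centres"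
      using that(3,4) finite_centres by (intro card_mono) auto
    moreover have "card (b \<union> b') + card (b \<inter> b') = card b + card b'"
      using card_Un_Int[OF finite_block[OF that(1)] finite_block[OF that(2)]] by simp
    ultimately show False
      using card_block[OF that(1)] card_block[OF that(2)] card_centres_le by linarith
  qed
  moreover have "finite {b\<in>B. b \<subseteq> centres}"
    using finite_blocks by simp
  ultimately have "card {b\<in>B. b \<subseteq> centres} \<le> Suc 0"
    unfolding card_le_Suc0_iff_eq[OF \<open>finite {b\<in>B. b \<subseteq> centres}\<close>] by blast
  then show ?thesis by simp
qed

lemma centre_pairs_in_block:
  assumes "b \<in> B" "b \<notin> P"
  shows "(SIGMA c:centres. S - pblock c - centres) \<inter> b \<times> b = (b \<inter> centres) \<times> (b \<inter> S - centres)"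
proof -
  have "y \<notin> pblock c" if "c \<in> b \<inter> centres" "y \<in> b \<inter> S - centres" for c y
  proof
    assume "y \<in> pblock c"
    moreover have "c \<in> S" "c \<noteq> y"
      using that centres_subset_S by auto
    ultimately have "b = pblock c"
      using that assms(1) mem_pblock pblock_in_P P_subset by (intro block_unique[of _ _ c y]) auto
    then show False
      using assms(2) pblock_in_P \<open>c \<in> S\<close> by simp
  qed
  then show ?thesis
    by auto
qed

lemma card_centre_pairs:
  "card (SIGMA c:centres. S - pblock c - centres) = card centres * (17 - card centres)"
proof -
  have "card (S - pblock c - centres) = 17 - card centres" if "c \<in> centres" for c
  proof -
    have cS: "c \<in> S" using that centres_subset_S by auto
    have "S - pblock c - centres = (S - pblock c) - (centres - {c})"
      using mem_pblock[OF cS] by auto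
    moreover have "centres - {c} \<subseteq> S - pblock c"
    proof
      fix c' assume c': "c' \<in> centres - {c}"
      have "c' \<notin> pblock c"
      proof
        assume "c' \<in> pblock c"
        then have "pblock c' = pblock c"
          using pblock_eq pblock_in_P[OF cS] by simp
        then show False
          using c' that inj_on_pblock_centres by (auto dest: inj_onD)
      qed
      then show "c' \<in> S - pblock c"
        using c' centres_subset_S by auto
    qed
    moreover have "card (S - pblock c) = 16"
    proof -
      have "pblock c \<in> B"
        using pblock_in_P[OF cS] P_subset by auto
      then show ?thesis
        using card_Diff_subset[OF finite_block P_block_subset_S[OF pblock_in_P[OF cS]]]
          card_S card_P card_block by simp
    qed
    moreover have "card (centres - {c}) = card centres - 1"
      using that finite_centres by simp
    moreover have "1 \<le> card centres" "card centres \<le> 5"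
      using that finite_centres card_centres_le by (auto simp: Suc_le_eq card_gt_0_iff)
    ultimately show ?thesis
      using finite_centres finite_S by (simp add: card_Diff_subset)
  qed
  then show ?thesis
    using finite_centres finite_S by simp
qed

lemma deficit_arith:
  fixes m s t :: nat
  assumes "s + t = 4" "1 \<le> m" "m \<le> s"
  shows "3 - m * t \<le> m * (s - m) + (if m = 4 then 3 else 0)"
proof -
  have "s \<in> {1, 2, 3, 4}" "m \<in> {1, 2, 3, 4}"
    using assms by auto
  moreover have "t = 4 - s"
    using assms(1) by simp
  ultimately show ?thesis
    using assms(3) by auto
qed

(* The deficit 3 - card (b \<inter> centres) * card (b \<inter> T) (truncated subtraction) is the part
   of the charge 3 of b that its centre-T pairs do not pay. *)
lemma deficit_centred_block_le:
  assumes "b \<in> B" "b \<notin> P" "b \<inter> centres \<noteq> {}"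
  shows "3 - card (b \<inter> centres) * card (b \<inter> T)
    \<le> card ((SIGMA c:centres. S - pblock c - centres) \<inter> b \<times> b) + (if b \<subseteq> centres then 3 else 0)"
proof -
  have fin: "finite b" using finite_block[OF assms(1)] .
  have le: "card (b \<inter> centres) \<le> card (b \<inter> S)"
    using fin centres_subset_S by (intro card_mono) auto
  have ge: "1 \<le> card (b \<inter> centres)"
    using assms(3) fin by (simp add: Suc_le_eq card_gt_0_iff)
  have "b \<inter> S - centres = b \<inter> S - b \<inter> centres"
    by auto
  then have diff: "card (b \<inter> S - centres) = card (b \<inter> S) - card (b \<inter> centres)"
    using fin centres_subset_S card_Diff_subset[of "b \<inter> centres" "b \<inter> S"] by auto
  have "3 - card (b \<inter> centres) * card (b \<inter> T)
      \<le> card (b \<inter> centres) * card (b \<inter> S - centres) + (if card (b \<inter> centres) = 4 then 3 else 0)"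
    unfolding diff by (rule deficit_arith[OF card_block_S_T[OF assms(1)] ge le])
  then show ?thesis
    unfolding card_block_Int_eq_iff[OF assms(1)] centre_pairs_in_block[OF assms(1,2)]
    by (simp add: card_cartesian_product)
qed

lemma sum_deficit_centred_blocks_le:
  "(\<Sum>b\<in>{b\<in>B - P. b \<inter> centres \<noteq> {}}. 3 - card (b \<inter> centres) * card (b \<inter> T))
    \<le> card centres * (17 - card centres) + 3"
proof -
  let ?C = "{b\<in>B - P. b \<inter> centres \<noteq> {}}"
  let ?H = "SIGMA c:centres. S - pblock c - centres"
  have "(\<Sum>b\<in>?C. 3 - card (b \<inter> centres) * card (b \<inter> T))
      \<le> (\<Sum>b\<in>?C. card (?H \<inter> b \<times> b) + (if b \<subseteq> centres then 3 else 0))"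
    using deficit_centred_block_le by (intro sum_mono) auto
  also have "\<dots> = (\<Sum>b\<in>?C. card (?H \<inter> b \<times> b)) + 3 * card {b\<in>?C. b \<subseteq> centres}"
    using finite_blocks by (simp add: sum.distrib sum.If_cases Collect_conj_eq Int_assoc)
  also have "(\<Sum>b\<in>?C. card (?H \<inter> b \<times> b)) \<le> card ?H"
    using finite_centres finite_S by (intro sum_card_pairs_in_blocks_le) auto
  also have "card {b\<in>?C. b \<subseteq> centres} \<le> card {b\<in>B. b \<subseteq> centres}"
    using finite_blocks by (intro card_mono) auto
  finally show ?thesis
    using card_centre_pairs card_blocks_within_centres_le_1 by linarith
qed

lemma centreless_block_cases:
  assumes "b \<in> B" "b \<notin> P" "b \<inter> centres = {}"
  shows "\<exists>p\<in>plain_blocks. \<exists>x\<in>p. b \<in> pendants x \<or> (\<exists>y\<in>S - p - centres. x \<in> b \<and> y \<in> b)"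
proof -
  obtain p x where p: "p \<in> plain_blocks" "x \<in> p" "x \<in> b"
    using centreless_block_meets_plain_block[OF assms] by auto
  have pP: "p \<in> P" using p(1) unfolding plain_blocks_def by simp
  have xS: "x \<in> S" using p(2) P_block_subset_S[OF pP] by auto
  show ?thesis
  proof (cases "b \<inter> S = {x}")
    case True
    then show ?thesis
      using p assms(1) unfolding pendants_def by auto
  next
    case False
    then obtain y where y: "y \<in> b" "y \<in> S" "y \<noteq> x"
      using p(3) xS by auto
    have "y \<notin> p"
    proof
      assume "y \<in> p"
      then have "b = p"
        using p(2,3) y assms(1) pP P_subset by (intro block_unique[of _ _ x y]) auto
      then show False
        using assms(2) pP by simp
    qed
    then show ?thesis
      using p y assms(3) by auto
  qed
qed

lemma card_blocks_at_plain_block_le: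
  assumes "p \<in> plain_blocks"
  shows "card ((\<Union>x\<in>p. pendants x) \<union> {b\<in>B. (p \<times> (S - p - centres)) \<inter> b \<times> b \<noteq> {}})
    \<le> 112 - 4 * card centres"
proof -
  have pP: "p \<in> P" "p \<inter> centres = {}"
    using assms unfolding plain_blocks_def by auto
  then have pB: "p \<in> B" "p \<subseteq> S"
    using P_subset P_block_subset_S by auto
  have "card (\<Union>x\<in>p. pendants x) \<le> (\<Sum>x\<in>p. card (pendants x))"
    using finite_block[OF pB(1)] by (rule card_UN_le)
  also have "\<dots> \<le> (\<Sum>x\<in>p. 12)"
    using pP(2) pB(2) by (intro sum_mono) (auto simp: centres_def)
  finally have pendants_le: "card (\<Union>x\<in>p. pendants x) \<le> 48"
    using card_block[OF pB(1)] by simp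
  have "card (S - p) = 16"
    using card_Diff_subset[OF finite_block[OF pB(1)] pB(2)] card_S card_P card_block[OF pB(1)] by simp
  moreover have "centres \<subseteq> S - p"
    using centres_subset_S pP(2) by auto
  ultimately have "card (S - p - centres) = 16 - card centres"
    using card_Diff_subset[OF finite_centres] by simp
  then have "card (p \<times> (S - p - centres)) = 4 * (16 - card centres)"
    using card_block[OF pB(1)] by (simp add: card_cartesian_product)
  moreover have "card {b\<in>B. (p \<times> (S - p - centres)) \<inter> b \<times> b \<noteq> {}}
      \<le> card (p \<times> (S - p - centres))"
    using finite_block[OF pB(1)] finite_S by (intro card_blocks_covering_pairs_le) auto
  ultimately show ?thesis
    using pendants_le card_centres_le
      card_Un_le[of "\<Union>x\<in>p. pendants x" "{b\<in>B. (p \<times> (S - p - centres)) \<inter> b \<times> b \<noteq> {}}"]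
    by linarith
qed

lemma card_centreless_blocks_le:
  "card {b\<in>B - P. b \<inter> centres = {}} \<le> card plain_blocks * (112 - 4 * card centres)"
proof -
  define A where "A p = (\<Union>x\<in>p. pendants x) \<union> {b\<in>B. (p \<times> (S - p - centres)) \<inter> b \<times> b \<noteq> {}}"
    for p
  have fin: "finite plain_blocks"
    using finite_P unfolding plain_blocks_def by simp
  have "{b\<in>B - P. b \<inter> centres = {}} \<subseteq> (\<Union>p\<in>plain_blocks. A p)"
  proof
    fix b assume "b \<in> {b\<in>B - P. b \<inter> centres = {}}"
    then obtain p x where "p \<in> plain_blocks" "x \<in> p"
      "b \<in> pendants x \<or> (\<exists>y\<in>S - p - centres. x \<in> b \<and> y \<in> b)" "b \<in> B"
      using centreless_block_cases by blast
    then show "b \<in> (\<Union>p\<in>plain_blocks. A p)"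
      unfolding A_def by blast
  qed
  moreover have "finite (A p)" for p
  proof -
    have "A p \<subseteq> B"
      unfolding A_def using pendant_in_B by auto
    then show ?thesis
      using finite_subset[OF _ finite_blocks] by blast
  qed
  ultimately have "card {b\<in>B - P. b \<inter> centres = {}} \<le> card (\<Union>p\<in>plain_blocks. A p)"
    using fin by (intro card_mono) auto
  also have "\<dots> \<le> (\<Sum>p\<in>plain_blocks. card (A p))"
    using fin by (rule card_UN_le)
  also have "\<dots> \<le> (\<Sum>p\<in>plain_blocks. 112 - 4 * card centres)"
    unfolding A_def using card_blocks_at_plain_block_le by (rule sum_mono)
  finally show ?thesis
    by simp
qed

lemma three_card_blocks_le:
  "3 * card (B - P) \<le> card centres * card T + (card centres * (17 - card centres) + 3)
    + 3 * (card plain_blocks * (112 - 4 * card centres))"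
proof -
  let ?w = "\<lambda>b. card (b \<inter> centres) * card (b \<inter> T)"
  let ?C1 = "{b\<in>B - P. b \<inter> centres \<noteq> {}}"
  let ?C0 = "{b\<in>B - P. b \<inter> centres = {}}"
  have "3 * card (B - P) = (\<Sum>b\<in>B - P. 3)"
    by simp
  also have "\<dots> \<le> (\<Sum>b\<in>B - P. ?w b + (3 - ?w b))"
    by (intro sum_mono) simp
  also have "\<dots> = (\<Sum>b\<in>B - P. ?w b) + (\<Sum>b\<in>?C1 \<union> ?C0. 3 - ?w b)"
  proof -
    have "B - P = ?C1 \<union> ?C0" by auto
    then show ?thesis by (simp only: sum.distrib)
  qed
  also have "(\<Sum>b\<in>?C1 \<union> ?C0. 3 - ?w b) = (\<Sum>b\<in>?C1. 3 - ?w b) + (\<Sum>b\<in>?C0. 3 - ?w b)"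
    using finite_blocks by (intro sum.union_disjoint) auto
  also have "(\<Sum>b\<in>?C0. 3 - ?w b) = 3 * card ?C0"
    by simp
  finally show ?thesis
    using sum_centre_T_pairs_le sum_deficit_centred_blocks_le card_centreless_blocks_le
    by linarith
qed

lemma card_blocks_le:
  assumes "360 \<le> v"
  shows "3 * card B \<le> 5 * v - 15"
proof -
  have "card B = card (B - P) + 5"
    using card_Diff_subset[OF finite_P P_subset] card_mono[OF finite_blocks P_subset] card_P by simp
  moreover have "card T = v - 20"
    using card_T card_P by simp
  moreover have "card centres \<in> {0, 1, 2, 3, 4, 5}"
    using card_centres_le by auto
  ultimately show ?thesis
    using three_card_blocks_le card_plain_blocks assms by auto
qed

end

section \<open>A packing with 5 m + 1 blocks\<close>

(* grid_point j c is the point (c, j) of Z_m \<times> {0, 1, 2}; the points 0, ..., 4 lie off the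
   grid, and slope_block m i a = {i, (a, 0), (a + i, 1), (a + 2 i, 2)}. *)
definition grid_point :: "nat \<Rightarrow> nat \<Rightarrow> nat" where
  "grid_point j c = 5 + 3 * c + j"

definition slope_block :: "nat \<Rightarrow> nat \<Rightarrow> nat \<Rightarrow> nat set" where
  "slope_block m i a = insert i ((\<lambda>j. grid_point j ((a + j * i) mod m)) ` {..<3})"

definition slope_design :: "nat \<Rightarrow> nat set set" where
  "slope_design m = insert {0, 1, 2, 3} ((\<lambda>(i, a). slope_block m i a) ` ({..<5} \<times> {..<m}))"

lemma grid_point_eq_iff:
  "j < 3 \<Longrightarrow> j' < 3 \<Longrightarrow> grid_point j c = grid_point j' c' \<longleftrightarrow> j = j' \<and> c = c'"
  unfolding grid_point_def by presburger

lemma slope_block_small_mem_iff: "i < 5 \<Longrightarrow> x < 5 \<Longrightarrow> x \<in> slope_block m i a \<longleftrightarrow> x = i"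
  unfolding slope_block_def grid_point_def by auto

lemma slope_block_large_mem_iff:
  assumes "i < 5" "5 \<le> x"
  shows "x \<in> slope_block m i a \<longleftrightarrow> (x - 5) div 3 = (a + (x - 5) mod 3 * i) mod m"
proof -
  have "x = grid_point ((x - 5) mod 3) ((x - 5) div 3)"
    using assms(2) unfolding grid_point_def by simp
  then have "x \<in> slope_block m i a \<longleftrightarrow>
      (\<exists>j<3. grid_point ((x - 5) mod 3) ((x - 5) div 3) = grid_point j ((a + j * i) mod m))"
    using assms unfolding slope_block_def by auto
  also have "\<dots> \<longleftrightarrow> (x - 5) div 3 = (a + (x - 5) mod 3 * i) mod m"
  proof
    assume "\<exists>j<3. grid_point ((x - 5) mod 3) ((x - 5) div 3) = grid_point j ((a + j * i) mod m)"
    then show "(x - 5) div 3 = (a + (x - 5) mod 3 * i) mod m"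
      using grid_point_eq_iff by auto
  next
    assume "(x - 5) div 3 = (a + (x - 5) mod 3 * i) mod m"
    then show "\<exists>j<3. grid_point ((x - 5) mod 3) ((x - 5) div 3) = grid_point j ((a + j * i) mod m)"
      by (intro exI[of _ "(x - 5) mod 3"]) auto
  qed
  finally show ?thesis .
qed

lemma card_slope_block:
  assumes "i < 5"
  shows "card (slope_block m i a) = 4"
proof -
  have "inj_on (\<lambda>j. grid_point j ((a + j * i) mod m)) {..<3}"
    by (auto simp: inj_on_def grid_point_eq_iff)
  moreover have "i \<notin> (\<lambda>j. grid_point j ((a + j * i) mod m)) ` {..<3}"
    using assms by (auto simp: grid_point_def)
  ultimately show ?thesis
    unfolding slope_block_def by (simp add: card_image)
qed

lemma slope_block_subset:
  assumes "i < 5" "0 < m" "5 + 3 * m \<le> v"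
  shows "slope_block m i a \<subseteq> {..<v}"
proof -
  have "grid_point j ((a + j * i) mod m) < v" if "j < 3" for j
    using that assms mod_less_divisor[of m "a + j * i"] unfolding grid_point_def by linarith
  then show ?thesis
    using assms unfolding slope_block_def by auto
qed

lemma eq_0_if_dvd_abs_less:
  fixes d m :: int
  assumes "m dvd d" "\<bar>d\<bar> < m"
  shows "d = 0"
proof (rule ccontr)
  assume "d \<noteq> 0"
  then have "\<bar>m\<bar> \<le> \<bar>d\<bar>"
    using assms(1) by (rule dvd_imp_le_int)
  then show False
    using assms(2) by linarith
qed

lemma int_dvd_diff_if_mod_eq: "(p::nat) mod m = q mod m \<Longrightarrow> int m dvd int p - int q"
  by (metis mod_eq_dvd_iff of_nat_mod)

lemma eq_if_mod_eq_add:
  fixes a a' c m :: nat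
  assumes "a < m" "a' < m" "(a + c) mod m = (a' + c) mod m"
  shows "a = a'"
proof -
  have "int m dvd int a - int a'"
    using int_dvd_diff_if_mod_eq[OF assms(3)] by simp
  moreover have "\<bar>int a - int a'\<bar> < int m"
    using assms(1,2) by linarith
  ultimately have "int a - int a' = 0"
    by (rule eq_0_if_dvd_abs_less)
  then show ?thesis
    by simp
qed

lemma slope_eq_if_two_columns:
  fixes i i' j j' a a' m :: nat
  assumes "(a + j * i) mod m = (a' + j * i') mod m" "(a + j' * i) mod m = (a' + j' * i') mod m"
    and "j \<noteq> j'" "j < 3" "j' < 3" "i < 5" "i' < 5" "10 \<le> m"
  shows "i = i'"
proof -
  have "int m dvd (int a + int j * int i) - (int a' + int j * int i')"
    "int m dvd (int a + int j' * int i) - (int a' + int j' * int i')"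
    using int_dvd_diff_if_mod_eq[OF assms(1)] int_dvd_diff_if_mod_eq[OF assms(2)] by simp_all
  then have "int m dvd ((int a + int j * int i) - (int a' + int j * int i'))
      - ((int a + int j' * int i) - (int a' + int j' * int i'))"
    by (rule dvd_diff)
  also have "((int a + int j * int i) - (int a' + int j * int i'))
      - ((int a + int j' * int i) - (int a' + int j' * int i')) = (int j - int j') * (int i - int i')"
    by (simp add: algebra_simps)
  finally have "int m dvd (int j - int j') * (int i - int i')" .
  moreover have "\<bar>(int j - int j') * (int i - int i')\<bar> < int m"
  proof -
    have "\<bar>int j - int j'\<bar> \<le> 2" "\<bar>int i - int i'\<bar> \<le> 4"
      using assms(4-7) by linarith+
    then have "\<bar>int j - int j'\<bar> * \<bar>int i - int i'\<bar> \<le> 2 * 4"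
      by (intro mult_mono) auto
    then show ?thesis
      using assms(8) by (simp add: abs_mult)
  qed
  ultimately have "(int j - int j') * (int i - int i') = 0"
    by (rule eq_0_if_dvd_abs_less)
  then show ?thesis
    using assms(3) by simp
qed

lemma slope_block_params_eq:
  assumes "i < 5" "i' < 5" "a < m" "a' < m" "10 \<le> m" "x \<noteq> y"
    and "{x, y} \<subseteq> slope_block m i a" "{x, y} \<subseteq> slope_block m i' a'"
  shows "i = i' \<and> a = a'"
proof -
  have offset: "a = a'" if "i = i'" "5 \<le> z" "z \<in> slope_block m i a" "z \<in> slope_block m i' a'" for z
  proof -
    have "(a + (z - 5) mod 3 * i) mod m = (a' + (z - 5) mod 3 * i) mod m"
      using that assms(1,2) slope_block_large_mem_iff by auto
    then show ?thesis
      by (rule eq_if_mod_eq_add[OF assms(3,4)])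
  qed
  have centre: "i = i' \<and> a = a'"
    if "z < 5" "z \<noteq> w" "{z, w} \<subseteq> slope_block m i a" "{z, w} \<subseteq> slope_block m i' a'" for z w
  proof -
    have "z = i" "z = i'"
      using that assms(1,2) slope_block_small_mem_iff by auto
    moreover have "5 \<le> w"
    proof (rule ccontr)
      assume "\<not> 5 \<le> w"
      then have "w = i"
        using that(3) assms(1) slope_block_small_mem_iff by auto
      then show False
        using that(2) \<open>z = i\<close> by simp
    qed
    ultimately show ?thesis
      using offset that by auto
  qed
  show ?thesis
  proof (cases "x < 5 \<or> y < 5")
    case True
    then show ?thesis
      using centre[of x y] centre[of y x] assms(6-8) by (auto simp: insert_commute)
  next
    case False
    define jx jy where "jx = (x - 5) mod 3" and "jy = (y - 5) mod 3"
    have x: "(x - 5) div 3 = (a + jx * i) mod m" "(x - 5) div 3 = (a' + jx * i') mod m"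
      and y: "(y - 5) div 3 = (a + jy * i) mod m" "(y - 5) div 3 = (a' + jy * i') mod m"
      using False assms(1,2,7,8) slope_block_large_mem_iff unfolding jx_def jy_def by auto
    have "jx \<noteq> jy"
    proof
      assume "jx = jy"
      then have "(x - 5) div 3 = (y - 5) div 3" "(x - 5) mod 3 = (y - 5) mod 3"
        using x(1) y(1) unfolding jx_def jy_def by simp_all
      then have "x - 5 = y - 5"
        by (metis div_mult_mod_eq)
      then show False
        using False assms(6) by linarith
    qed
    moreover have "(a + jx * i) mod m = (a' + jx * i') mod m" "(a + jy * i) mod m = (a' + jy * i') mod m"
      using x y by simp_all
    moreover have "jx < 3" "jy < 3"
      unfolding jx_def jy_def by simp_all
    ultimately have "i = i'"
      using slope_eq_if_two_columns[OF _ _ _ _ _ assms(1,2,5)] by blast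
    moreover have "5 \<le> x" "x \<in> slope_block m i a" "x \<in> slope_block m i' a'"
      using False assms(7,8) by auto
    ultimately show ?thesis
      using offset by blast
  qed
qed

lemma slope_design_packing:
  assumes "10 \<le> m" "5 + 3 * m \<le> v"
  shows "packing v 4 {..<v} (slope_design m)"
proof -
  have "packing (card {..<v}) 4 {..<v} (slope_design m)"
  proof (rule packingI)
    fix b assume "b \<in> slope_design m"
    then consider "b = {0, 1, 2, 3}" | i a where "i < 5" "a < m" "b = slope_block m i a"
      unfolding slope_design_def by auto
    then show "b \<subseteq> {..<v} \<and> card b = 4"
    proof cases
      case 1
      then show ?thesis using assms by auto
    next
      case 2
      then show ?thesis
        using assms slope_block_subset[of i m v a] card_slope_block by simp
    qed
  next
    fix b b' x y
    assume b: "b \<in> slope_design m" "b' \<in> slope_design m" and xy: "x \<noteq> y" "{x, y} \<subseteq> b" "{x, y} \<subseteq> b'"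
    have not_base: "\<not> {x, y} \<subseteq> {0, 1, 2, 3}" if "i < 5" "{x, y} \<subseteq> slope_block m i a" for i a
      using that xy(1) slope_block_small_mem_iff[of i] by auto
    consider "b = {0, 1, 2, 3}" | i a where "i < 5" "a < m" "b = slope_block m i a"
      using b(1) unfolding slope_design_def by auto
    then show "b = b'"
    proof cases
      case 1
      from b(2) consider "b' = {0, 1, 2, 3}" | i' a' where "i' < 5" "a' < m" "b' = slope_block m i' a'"
        unfolding slope_design_def by auto
      then show ?thesis
        using 1 xy not_base by cases auto
    next
      case (2 i a)
      from b(2) consider "b' = {0, 1, 2, 3}" | i' a' where "i' < 5" "a' < m" "b' = slope_block m i' a'"
        unfolding slope_design_def by auto
      then show ?thesis
      proof cases
        case 1
        then show ?thesis
          using 2 xy not_base by auto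
      next
        case (2 i' a')
        then have "i = i' \<and> a = a'"
          using \<open>i < 5\<close> \<open>a < m\<close> \<open>b = slope_block m i a\<close> xy
          by (intro slope_block_params_eq[OF _ _ _ _ assms(1) xy(1)]) auto
        then show ?thesis
          using 2 \<open>b = slope_block m i a\<close> by simp
      qed
    qed
  qed simp
  then show ?thesis
    by simp
qed

lemma card_slope_design:
  assumes "10 \<le> m"
  shows "card (slope_design m) = 5 * m + 1"
proof -
  have "inj_on (\<lambda>(i, a). slope_block m i a) ({..<5} \<times> {..<m})"
  proof (rule inj_onI, clarify)
    fix i a i' a' assume ia: "i < 5" "a < m" "i' < 5" "a' < m"
      and eq: "slope_block m i a = slope_block m i' a'"
    have "grid_point 0 a \<in> slope_block m i a"
      unfolding slope_block_def using ia(2) by (intro insertI2 image_eqI[of _ _ 0]) simp_all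
    moreover have "i \<in> slope_block m i a" "i \<noteq> grid_point 0 a"
      using ia(1) unfolding slope_block_def grid_point_def by auto
    ultimately show "i = i' \<and> a = a'"
      using slope_block_params_eq[OF ia(1,3,2,4) assms, where x = i and y = "grid_point 0 a"] eq
      by simp
  qed
  moreover have "{0, 1, 2, 3} \<noteq> slope_block m i a" if "i < 5" for i a
  proof
    assume "{0, 1, 2, 3} = slope_block m i a"
    then have "0 \<in> slope_block m i a" "1 \<in> slope_block m i a"
      by auto
    then show False
      using slope_block_small_mem_iff[OF that] by simp
  qed
  ultimately have "{0, 1, 2, 3} \<notin> (\<lambda>(i, a). slope_block m i a) ` ({..<5} \<times> {..<m})"
    by auto
  with \<open>inj_on _ _\<close> show ?thesis
    unfolding slope_design_def by (simp add: card_image card_cartesian_product)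
qed

lemma slope_design_max_ppc_size:
  assumes "13 \<le> m"
  shows "max_ppc_size (slope_design m) 5"
proof (rule max_ppc_sizeI)
  let ?P = "(\<lambda>i. slope_block m i i) ` {..<5}"
  have disjoint: "slope_block m i i \<inter> slope_block m i' i' = {}" if "i < 5" "i' < 5" "i \<noteq> i'" for i i'
  proof (rule ccontr)
    assume "slope_block m i i \<inter> slope_block m i' i' \<noteq> {}"
    then obtain x where x: "x \<in> slope_block m i i" "x \<in> slope_block m i' i'"
      by auto
    have "x \<ge> 5"
    proof (rule ccontr)
      assume "\<not> x \<ge> 5"
      then have "x = i" "x = i'"
        using x that(1,2) slope_block_small_mem_iff by simp_all
      then show False
        using that(3) by simp
    qed
    moreover have "(c + r * c) mod m = (r + 1) * c" if "r < 3" "c < 5" for r c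
    proof -
      have "(r + 1) * c \<le> 3 * 4"
        using that by (intro mult_mono) auto
      then show ?thesis
        using assms by (simp add: algebra_simps)
    qed
    ultimately have "((x - 5) mod 3 + 1) * i = ((x - 5) mod 3 + 1) * i'"
      using x that(1,2) slope_block_large_mem_iff by simp
    then show False
      using that(3) mult_left_cancel[of "(x - 5) mod 3 + 1" i i'] by simp
  qed
  show "is_ppc (slope_design m) ?P"
    unfolding is_ppc_def
  proof (intro conjI ballI impI)
    show "?P \<subseteq> slope_design m"
    proof
      fix b assume "b \<in> ?P"
      then obtain i where "i < 5" "b = slope_block m i i"
        by auto
      then show "b \<in> slope_design m"
        unfolding slope_design_def using assms by (intro insertI2 rev_image_eqI[of "(i, i)"]) auto
    qed
    fix b c assume "b \<in> ?P" "c \<in> ?P" "b \<noteq> c"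
    then obtain i i' where "i < 5" "i' < 5" "i \<noteq> i'" "b = slope_block m i i" "c = slope_block m i' i'"
      by auto
    then show "b \<inter> c = {}"
      using disjoint by simp
  qed
  have "inj_on (\<lambda>i. slope_block m i i) {..<5}"
  proof (rule inj_onI)
    fix i i' assume "i \<in> {..<5}" "i' \<in> {..<5}" "slope_block m i i = slope_block m i' i'"
    then show "i = i'"
      using slope_block_small_mem_iff[of i' i m i'] by (auto simp: slope_block_def)
  qed
  then show "card ?P = 5"
    by (simp add: card_image)
next
  fix Q assume "is_ppc (slope_design m) Q"
  moreover have "b \<inter> {..<5} \<noteq> {}" if "b \<in> slope_design m" for b
    using that unfolding slope_design_def slope_block_def by force
  ultimately show "card Q \<le> 5"
    using card_ppc_le_transversal[of _ Q "{..<5}"] by simp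
qed

section \<open>Bounds on beta\<close>

lemma finite_packing_sizes:
  "finite {card B | B. packing v k {..<v} (B :: nat set set) \<and> max_ppc_size B \<rho>}"
proof (rule finite_subset[of _ "{..2 ^ v}"])
  show "{card B | B. packing v k {..<v} (B :: nat set set) \<and> max_ppc_size B \<rho>} \<subseteq> {..2 ^ v}"
  proof
    fix n assume "n \<in> {card B | B. packing v k {..<v} (B :: nat set set) \<and> max_ppc_size B \<rho>}"
    then obtain B :: "nat set set" where "n = card B" "packing v k {..<v} B"
      by auto
    moreover have "B \<subseteq> Pow {..<v}"
      using \<open>packing v k {..<v} B\<close> unfolding packing_def by auto
    ultimately show "n \<in> {..2 ^ v}"
      using card_mono[of "Pow {..<v}" B] by (simp add: card_Pow)
  qed
qed simp

lemma card_le_beta: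
  assumes "packing v k {..<v} B" "max_ppc_size B \<rho>"
  shows "card B \<le> beta \<rho> v k"
  unfolding beta_def using assms finite_packing_sizes by (intro Max_ge) auto

lemma beta_attained:
  assumes "packing v k {..<v} B" "max_ppc_size B \<rho>"
  obtains B' where "packing v k {..<v} B'" "max_ppc_size B' \<rho>" "card B' = beta \<rho> v k"
proof -
  have "beta \<rho> v k \<in> {card B | B. packing v k {..<v} (B :: nat set set) \<and> max_ppc_size B \<rho>}"
    unfolding beta_def using assms finite_packing_sizes by (intro Max_in) auto
  then show ?thesis
    using that by auto
qed

lemma card_packing_le_if_max_ppc_size_5:
  assumes "packing v 4 X B" "max_ppc_size B 5" "360 \<le> v"
  shows "3 * card B \<le> 5 * v - 15"
proof -
  obtain P where "is_ppc B P" "card P = 5"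
    using assms(2) unfolding max_ppc_size_def by auto
  then interpret packing4_max_ppc5 v X B P
    using assms(1,2) is_ppc_card_le_max_ppc_size by unfold_locales simp_all
  show ?thesis
    using assms(3) by (rule card_blocks_le)
qed

lemma beta_bounds_arith:
  fixes v b :: nat
  assumes "360 \<le> v" "5 * ((v - 5) div 3) + 1 \<le> b" "3 * b \<le> 5 * v - 15"
  shows "int b \<le> (5 * int v - 15) div 3"
    and "v mod 3 = 0 \<Longrightarrow> 3 * int b \<ge> 5 * int v - 27"
    and "v mod 3 = 1 \<Longrightarrow> 3 * int b \<ge> 5 * int v - 32"
    and "v mod 3 = 2 \<Longrightarrow> 3 * int b \<ge> 5 * int v - 22"
proof -
  have "3 * b + 15 \<le> 5 * v"
    using assms(1,3) by linarith
  then have upper: "3 * int b \<le> 5 * int v - 15"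
    using of_nat_le_iff[of "3 * b + 15" "5 * v"] by simp
  show "int b \<le> (5 * int v - 15) div 3"
    using zdiv_mono1[OF upper, of 3] by simp
  define q where "q = int ((v - 5) div 3)"
  have "int (5 * ((v - 5) div 3) + 1) \<le> int b"
    using assms(2) by (simp only: of_nat_le_iff)
  then have lower: "3 * (5 * q + 1) \<le> 3 * int b"
    unfolding q_def by simp
  have "v mod 3 = 0 \<longrightarrow> 5 * int v - 27 \<le> 3 * (5 * q + 1)"
    "v mod 3 = 1 \<longrightarrow> 5 * int v - 32 \<le> 3 * (5 * q + 1)"
    "v mod 3 = 2 \<longrightarrow> 5 * int v - 22 \<le> 3 * (5 * q + 1)"
    unfolding q_def using assms(1) by presburger+
  with lower show "v mod 3 = 0 \<Longrightarrow> 3 * int b \<ge> 5 * int v - 27"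
    and "v mod 3 = 1 \<Longrightarrow> 3 * int b \<ge> 5 * int v - 32"
    and "v mod 3 = 2 \<Longrightarrow> 3 * int b \<ge> 5 * int v - 22"
    by linarith+
qed

theorem theorem4p5:
  fixes v :: nat
  assumes "v \<ge> 360"
  shows "int (beta 5 v 4) \<le> (5 * int v - 15) div 3
    \<and> (v mod 3 = 0 \<longrightarrow> 3 * int (beta 5 v 4) \<ge> 5 * int v - 27)
    \<and> (v mod 3 = 1 \<longrightarrow> 3 * int (beta 5 v 4) \<ge> 5 * int v - 32)
    \<and> (v mod 3 = 2 \<longrightarrow> 3 * int (beta 5 v 4) \<ge> 5 * int v - 22)"
proof -
  define m where "m = (v - 5) div 3"
  have m: "13 \<le> m" "5 + 3 * m \<le> v"
    using assms unfolding m_def by auto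
  have design: "packing v 4 {..<v} (slope_design m)" "max_ppc_size (slope_design m) 5"
    using slope_design_packing[of m v] slope_design_max_ppc_size[of m] m by auto
  have "5 * m + 1 \<le> beta 5 v 4"
    using card_le_beta[OF design] card_slope_design[of m] m(1) by simp
  moreover obtain B where B: "packing v 4 {..<v} B" "max_ppc_size B 5" "card B = beta 5 v 4"
    using beta_attained[OF design] .
  then have "3 * beta 5 v 4 \<le> 5 * v - 15"
    using card_packing_le_if_max_ppc_size_5[OF B(1,2) assms] by simp
  ultimately show ?thesis
    using beta_bounds_arith[OF assms] unfolding m_def by simp
qed

end
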